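(* Let $A$, $B$, $I$ be finite non-empty sets, $\{V_i\}_{i\in I}\subseteq\mathcal R(A)$, $\{W_i\}_{i\in I}\subseteq\mathcal R(B)$, $Z\in\mathcal R(A,B)$, let $t\in\{1,\dots,6\}$, $\phi=\phi^{(t)}$, and define $R_1=Z$, $R_{k+1}=R_k\wedge\phi(R_k)$ for $k\in\mathbb N$. Suppose the subalgebra of $\mathcal L$ generated by $\mathrm{im}(Z)\cup\bigcup_{i\in I}(\mathrm{im}(V_i)\cup\mathrm{im}(W_i))$ is finite. Then: (a) the sequence $\{R_k\}_{k\in\mathbb N}$ is descending and the set $\{R_k:k\in\mathbb N\}$ is finite, and there is a least natural number $k$ such that $R_k=R_{k+1}$; (b) for this $k$, $R_k$ is the greatest solution to the system $WL^{2\text{-}t}(A,B,I,V_i,W_i,Z)$.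
   Context: $\mathcal L=(L,\wedge,\vee,\otimes,\to,0,1)$ is a complete residuated lattice; $\mathrm{im}$ denotes the set of values of a fuzzy relation, and subalgebras are with respect to $(L,\wedge,\vee,\otimes,\to,0,1)$. For non-empty sets $X,Y$, $\mathcal R(X,Y)$ is the set of fuzzy relations $X\times Y\to L$, $\mathcal R(X)=\mathcal R(X,X)$, ordered pointwise with pointwise meets; $R^{-1}(y,x)=R(x,y)$; $(R\circ S)(x,t)=\bigvee_{y}R(x,y)\otimes S(y,t)$. Residuals: for $S\in\mathcal R(X,Y)$, $T\in\mathcal R(X)$, $T'\in\mathcal R(Y)$: $(S/T)(x,y)=\bigwedge_{x'\in X}(T(x',x)\to S(x',y))$, $(S\backslash T')(x,y)=\bigwedge_{y'\in Y}(T'(y,y')\to S(x,y'))$. The maps $\phi^{(t)}:\mathcal R(A,B)\to\mathcal R(A,B)$ are: $\phi^{(1)}(R)=\bigwedge_{i}[(W_i\circ R^{-1})\backslash V_i]^{-1}$; $\phi^{(2)}(R)=\bigwedge_{i}(R\circ W_i)/V_i$; $\phi^{(3)}(R)=\bigwedge_{i}[(W_i\circ R^{-1})\backslash V_i]^{-1}\wedge[(V_i\circ R)\backslash W_i]$; $\phi^{(4)}(R)=\bigwedge_{i}[(R\circ W_i)/V_i]\wedge[(R^{-1}\circ V_i)/W_i]^{-1}$; $\phi^{(5)}(R)=\bigwedge_{i}[(R\circ W_i)/V_i]\wedge[(V_i\circ R)\backslash W_i]$; $\phi^{(6)}(R)=\bigwedge_{i}[(W_i\circ R^{-1})\backslash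 V_i]^{-1}\wedge[(R^{-1}\circ V_i)/W_i]^{-1}$. Heterogeneous systems with unknown $U\in\mathcal R(A,B)$: $WL^{2\text{-}1}$: $U^{-1}\circ V_i\le W_i\circ U^{-1}$ ($i\in I$), $U\le Z$; $WL^{2\text{-}2}$: $V_i\circ U\le U\circ W_i$ ($i\in I$), $U\le Z$; $WL^{2\text{-}3}$: $U^{-1}\circ V_i\le W_i\circ U^{-1}$ and $U\circ W_i\le V_i\circ U$ ($i\in I$), $U\le Z$; $WL^{2\text{-}4}$: $V_i\circ U\le U\circ W_i$ and $W_i\circ U^{-1}\le U^{-1}\circ V_i$ ($i\in I$), $U\le Z$; $WL^{2\text{-}5}$: $V_i\circ U=U\circ W_i$ ($i\in I$), $U\le Z$; $WL^{2\text{-}6}$: $U^{-1}\circ V_i=W_i\circ U^{-1}$ ($i\in I$), $U\le Z$. *)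

theory Defs
  imports Main
begin

class complete_residuated_lattice = complete_lattice + comm_monoid_mult +
  fixes resid :: "'a \<Rightarrow> 'a \<Rightarrow> 'a"
  assumes one_is_top: "(1::'a) = top"
  assumes residuation: "x * y \<le> z \<longleftrightarrow> x \<le> resid y z"

inductive_set subalg_gen :: "'l::complete_residuated_lattice set \<Rightarrow> 'l set"
  for S :: "'l set" where
  base: "x \<in> S \<Longrightarrow> x \<in> subalg_gen S"
| bot: "bot \<in> subalg_gen S"
| top: "top \<in> subalg_gen S"
| inf: "x \<in> subalg_gen S \<Longrightarrow> y \<in> subalg_gen S \<Longrightarrow> inf x y \<in> subalg_gen S"
| sup: "x \<in> subalg_gen S \<Longrightarrow> y \<in> subalg_gen S \<Longrightarrow> sup x y \<in> subalg_gen S"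
| times: "x \<in> subalg_gen S \<Longrightarrow> y \<in> subalg_gen S \<Longrightarrow> x * y \<in> subalg_gen S"
| resid: "x \<in> subalg_gen S \<Longrightarrow> y \<in> subalg_gen S \<Longrightarrow> resid x y \<in> subalg_gen S"

text \<open>A fuzzy relation between X and Y is a function X => Y => L; the pointwise
  order and pointwise meets are Isabelle's order/inf on functions.\<close>

definition conv :: "('x \<Rightarrow> 'y \<Rightarrow> 'l) \<Rightarrow> 'y \<Rightarrow> 'x \<Rightarrow> 'l" where
  "conv R = (\<lambda>y x. R x y)"

definition rcomp :: "('x \<Rightarrow> 'y \<Rightarrow> 'l::complete_residuated_lattice) \<Rightarrow> ('y \<Rightarrow> 'z \<Rightarrow> 'l) \<Rightarrow> 'x \<Rightarrow> 'z \<Rightarrow> 'l" where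
  "rcomp R S = (\<lambda>x t. SUP y. R x y * S y t)"

definition rres :: "('x \<Rightarrow> 'y \<Rightarrow> 'l::complete_residuated_lattice) \<Rightarrow> ('x \<Rightarrow> 'x \<Rightarrow> 'l) \<Rightarrow> 'x \<Rightarrow> 'y \<Rightarrow> 'l" where
  "rres S T = (\<lambda>x y. INF x'. resid (T x' x) (S x' y))"

definition lres :: "('x \<Rightarrow> 'y \<Rightarrow> 'l::complete_residuated_lattice) \<Rightarrow> ('y \<Rightarrow> 'y \<Rightarrow> 'l) \<Rightarrow> 'x \<Rightarrow> 'y \<Rightarrow> 'l" where
  "lres S T' = (\<lambda>x y. INF y'. resid (T' y y') (S x y'))"

definition phi :: "nat \<Rightarrow> ('i \<Rightarrow> 'a \<Rightarrow> 'a \<Rightarrow> 'l::complete_residuated_lattice) \<Rightarrow> ('i \<Rightarrow> 'b \<Rightarrow> 'b \<Rightarrow> 'l)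
    \<Rightarrow> ('a \<Rightarrow> 'b \<Rightarrow> 'l) \<Rightarrow> 'a \<Rightarrow> 'b \<Rightarrow> 'l" where
  "phi t V W R =
    (if t = 1 then (INF i. conv (lres (rcomp (W i) (conv R)) (V i)))
     else if t = 2 then (INF i. rres (rcomp R (W i)) (V i))
     else if t = 3 then (INF i. inf (conv (lres (rcomp (W i) (conv R)) (V i)))
                                    (lres (rcomp (V i) R) (W i)))
     else if t = 4 then (INF i. inf (rres (rcomp R (W i)) (V i))
                                    (conv (rres (rcomp (conv R) (V i)) (W i))))
     else if t = 5 then (INF i. inf (rres (rcomp R (W i)) (V i))
                                    (lres (rcomp (V i) R) (W i)))
     else (INF i. inf (conv (lres (rcomp (W i) (conv R)) (V i)))
                      (conv (rres (rcomp (conv R) (V i)) (W i)))))"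

text \<open>The sequence R_1 = Z, R_(k+1) = R_k meet phi(R_k), indexed by k >= 1.\<close>
definition Rseq :: "nat \<Rightarrow> ('i \<Rightarrow> 'a \<Rightarrow> 'a \<Rightarrow> 'l::complete_residuated_lattice) \<Rightarrow> ('i \<Rightarrow> 'b \<Rightarrow> 'b \<Rightarrow> 'l)
    \<Rightarrow> ('a \<Rightarrow> 'b \<Rightarrow> 'l) \<Rightarrow> nat \<Rightarrow> 'a \<Rightarrow> 'b \<Rightarrow> 'l" where
  "Rseq t V W Z k = ((\<lambda>R. inf R (phi t V W R)) ^^ (k - 1)) Z"

definition is_WL :: "nat \<Rightarrow> ('i \<Rightarrow> 'a \<Rightarrow> 'a \<Rightarrow> 'l::complete_residuated_lattice) \<Rightarrow> ('i \<Rightarrow> 'b \<Rightarrow> 'b \<Rightarrow> 'l)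
    \<Rightarrow> ('a \<Rightarrow> 'b \<Rightarrow> 'l) \<Rightarrow> ('a \<Rightarrow> 'b \<Rightarrow> 'l) \<Rightarrow> bool" where
  "is_WL t V W Z U \<longleftrightarrow> U \<le> Z \<and>
    (if t = 1 then (\<forall>i. rcomp (conv U) (V i) \<le> rcomp (W i) (conv U))
     else if t = 2 then (\<forall>i. rcomp (V i) U \<le> rcomp U (W i))
     else if t = 3 then (\<forall>i. rcomp (conv U) (V i) \<le> rcomp (W i) (conv U)
                            \<and> rcomp U (W i) \<le> rcomp (V i) U)
     else if t = 4 then (\<forall>i. rcomp (V i) U \<le> rcomp U (W i)
                            \<and> rcomp (W i) (conv U) \<le> rcomp (conv U) (V i))
     else if t = 5 then (\<forall>i. rcomp (V i) U = rcomp U (W i))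
     else (\<forall>i. rcomp (conv U) (V i) = rcomp (W i) (conv U)))"

definition greatest_WL where
  "greatest_WL t V W Z U \<longleftrightarrow> is_WL t V W Z U \<and> (\<forall>U'. is_WL t V W Z U' \<longrightarrow> U' \<le> U)"

end

theory Submission
  imports Defs
begin

text \<open>By residuation every inclusion between compositions in WL^(2-t) is an inclusion of
  U (or of its converse) in a residual, so the solutions of WL^(2-t) are exactly the
  post-fixpoints of the monotone map phi^(t) below Z.  Hence every solution lies below
  every term of the descending iteration R |-> R meet phi(R) started at Z, and a term
  equal to its successor is itself a solution, hence the greatest one.  Since phi only
  uses meets, joins, products and residua over finite index sets, all terms take values
  in the subalgebra generated by the data; if it is finite, there are only finitely many
  such relations, so the descending sequence must repeat a value.\<close>

lemma residuated_mult_right_mono: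
  fixes a b c :: "'l::complete_residuated_lattice"
  assumes "a \<le> b"
  shows "a * c \<le> b * c"
proof -
  have "b \<le> resid c (b * c)" by (simp flip: residuation)
  with assms have "a \<le> resid c (b * c)" by order
  then show ?thesis by (simp add: residuation)
qed

lemma residuated_mult_mono:
  fixes a b c d :: "'l::complete_residuated_lattice"
  assumes "a \<le> b" and "c \<le> d"
  shows "a * c \<le> b * d"
proof -
  have "a * c \<le> b * c" using \<open>a \<le> b\<close> by (rule residuated_mult_right_mono)
  also have "\<dots> \<le> b * d"
    using residuated_mult_right_mono[OF \<open>c \<le> d\<close>, of b] by (simp add: mult.commute)
  finally show ?thesis .
qed

lemma resid_mono_right:
  fixes y z z' :: "'l::complete_residuated_lattice"
  assumes "z \<le> z'"
  shows "resid y z \<le> resid y z'"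
proof -
  have "resid y z * y \<le> z" by (simp add: residuation)
  with assms have "resid y z * y \<le> z'" by order
  then show ?thesis by (simp add: residuation)
qed

lemma le_rres_iff_rcomp_le: "Q \<le> rres S P \<longleftrightarrow> rcomp P Q \<le> S"
  unfolding rcomp_def rres_def le_fun_def
  by (simp add: SUP_le_iff le_INF_iff mult.commute flip: residuation) blast

lemma le_lres_iff_rcomp_le: "Q \<le> lres S P \<longleftrightarrow> rcomp Q P \<le> S"
  unfolding rcomp_def lres_def le_fun_def
  by (simp add: SUP_le_iff le_INF_iff mult.commute flip: residuation) blast

lemma le_conv_iff_conv_le: "U \<le> conv X \<longleftrightarrow> conv U \<le> X"
  unfolding conv_def le_fun_def by auto

lemma conv_mono: "R \<le> R' \<Longrightarrow> conv R \<le> conv R'"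
  unfolding conv_def le_fun_def by auto

lemma rcomp_mono: "R \<le> R' \<Longrightarrow> S \<le> S' \<Longrightarrow> rcomp R S \<le> rcomp R' S'"
  unfolding rcomp_def le_fun_def by (auto intro!: SUP_mono' residuated_mult_mono)

lemma lres_mono: "S \<le> S' \<Longrightarrow> lres S T \<le> lres S' T"
  unfolding lres_def le_fun_def by (auto intro!: INF_mono' resid_mono_right)

lemma rres_mono: "S \<le> S' \<Longrightarrow> rres S T \<le> rres S' T"
  unfolding rres_def le_fun_def by (auto intro!: INF_mono' resid_mono_right)

lemma mono_phi: "mono (phi t V W)"
  unfolding phi_def
  by (rule monoI) (auto intro!: INF_mono' inf_mono conv_mono lres_mono rres_mono rcomp_mono)

text \<open>No restriction on t is needed: any t outside 1..6 selects the branch of t = 6 in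
  both phi and is_WL.\<close>

lemma is_WL_iff_post_fixpoint: "is_WL t V W Z U \<longleftrightarrow> U \<le> Z \<and> U \<le> phi t V W U"
  unfolding is_WL_def phi_def
  by (auto simp add: le_INF_iff le_conv_iff_conv_le le_rres_iff_rcomp_le le_lres_iff_rcomp_le
      intro: antisym)

definition descent :: "('a::lattice \<Rightarrow> 'a) \<Rightarrow> 'a \<Rightarrow> nat \<Rightarrow> 'a" where
  "descent f z n = ((\<lambda>x. inf x (f x)) ^^ n) z"

lemma descent_0 [simp]: "descent f z 0 = z"
  by (simp add: descent_def)

lemma descent_Suc [simp]: "descent f z (Suc n) = inf (descent f z n) (f (descent f z n))"
  by (simp add: descent_def)

lemma antimono_descent: "antimono (descent f z)"
  by (rule antimonoI, rule lift_Suc_antimono_le) simp_all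

lemma post_fixpoint_le_descent:
  assumes "mono f" and "u \<le> z" and "u \<le> f u"
  shows "u \<le> descent f z n"
proof (induction n)
  case 0
  from \<open>u \<le> z\<close> show ?case by simp
next
  case (Suc n)
  have "u \<le> f (descent f z n)"
    using \<open>u \<le> f u\<close> monoD[OF \<open>mono f\<close> Suc.IH] by order
  with Suc.IH show ?case by simp
qed

lemma descent_stable_imp_post_fixpoint:
  assumes "descent f z n = descent f z (Suc n)"
  shows "descent f z n \<le> z" and "descent f z n \<le> f (descent f z n)"
proof -
  show "descent f z n \<le> z"
    using antimono_descent[of f z] by (auto dest: antimonoD[of _ 0 n])
  have "descent f z n = inf (descent f z n) (f (descent f z n))"
    using assms by simp
  then show "descent f z n \<le> f (descent f z n)"
    by (metis inf.absorb_iff1 inf.cobounded2)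
qed

lemma antimono_finite_range_imp_stable:
  fixes r :: "nat \<Rightarrow> 'a::order"
  assumes "antimono r" and "finite (range r)"
  shows "\<exists>n. r n = r (Suc n)"
proof -
  have "\<not> inj r"
    using assms(2) finite_imageD by fastforce
  then obtain m n where "m < n" and "r m = r n"
    unfolding inj_def by (metis linorder_neqE_nat)
  moreover have "r n \<le> r (Suc m)" and "r (Suc m) \<le> r m"
    using \<open>m < n\<close> antimonoD[OF assms(1)] by simp_all
  ultimately have "r m = r (Suc m)" by order
  then show ?thesis ..
qed

definition valued_in_subalg :: "'l::complete_residuated_lattice set \<Rightarrow> ('x \<Rightarrow> 'y \<Rightarrow> 'l) \<Rightarrow> bool"
  where "valued_in_subalg S R \<longleftrightarrow> (\<forall>x y. R x y \<in> subalg_gen S)"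

lemma valued_in_subalg_base: "range (case_prod R) \<subseteq> S \<Longrightarrow> valued_in_subalg S R"
  unfolding valued_in_subalg_def by (metis case_prod_conv rangeI subsetD subalg_gen.base)

lemma subalg_gen_SUP:
  "finite A \<Longrightarrow> (\<And>x. x \<in> A \<Longrightarrow> f x \<in> subalg_gen S) \<Longrightarrow> (SUP x\<in>A. f x) \<in> subalg_gen S"
  by (induction A rule: finite_induct) (auto intro: subalg_gen.intros)

lemma subalg_gen_INF:
  "finite A \<Longrightarrow> (\<And>x. x \<in> A \<Longrightarrow> f x \<in> subalg_gen S) \<Longrightarrow> (INF x\<in>A. f x) \<in> subalg_gen S"
  by (induction A rule: finite_induct) (auto intro: subalg_gen.intros)

lemma valued_in_subalg_conv: "valued_in_subalg S R \<Longrightarrow> valued_in_subalg S (conv R)"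
  unfolding valued_in_subalg_def conv_def by auto

lemma valued_in_subalg_inf:
  "valued_in_subalg S R \<Longrightarrow> valued_in_subalg S R' \<Longrightarrow> valued_in_subalg S (inf R R')"
  unfolding valued_in_subalg_def by (auto intro: subalg_gen.inf)

lemma valued_in_subalg_INF:
  "(\<And>i. valued_in_subalg S (F (i::'i::finite))) \<Longrightarrow> valued_in_subalg S (INF i. F i)"
  unfolding valued_in_subalg_def by (auto intro!: subalg_gen_INF)

lemma valued_in_subalg_rcomp:
  fixes Q :: "'y::finite \<Rightarrow> 'z \<Rightarrow> 'l::complete_residuated_lattice"
  shows "valued_in_subalg S R \<Longrightarrow> valued_in_subalg S Q \<Longrightarrow> valued_in_subalg S (rcomp R Q)"
  unfolding valued_in_subalg_def rcomp_def by (auto intro!: subalg_gen_SUP subalg_gen.times)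

lemma valued_in_subalg_lres:
  fixes Q :: "'y::finite \<Rightarrow> 'y \<Rightarrow> 'l::complete_residuated_lattice"
  shows "valued_in_subalg S R \<Longrightarrow> valued_in_subalg S Q \<Longrightarrow> valued_in_subalg S (lres R Q)"
  unfolding valued_in_subalg_def lres_def by (auto intro!: subalg_gen_INF subalg_gen.resid)

lemma valued_in_subalg_rres:
  fixes Q :: "'x::finite \<Rightarrow> 'x \<Rightarrow> 'l::complete_residuated_lattice"
  shows "valued_in_subalg S R \<Longrightarrow> valued_in_subalg S Q \<Longrightarrow> valued_in_subalg S (rres R Q)"
  unfolding valued_in_subalg_def rres_def by (auto intro!: subalg_gen_INF subalg_gen.resid)

lemma valued_in_subalg_phi:
  fixes V :: "'i::finite \<Rightarrow> 'a::finite \<Rightarrow> 'a \<Rightarrow> 'l::complete_residuated_lattice"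
    and W :: "'i \<Rightarrow> 'b::finite \<Rightarrow> 'b \<Rightarrow> 'l"
  assumes "valued_in_subalg S R" and "\<And>i. valued_in_subalg S (V i)" and "\<And>i. valued_in_subalg S (W i)"
  shows "valued_in_subalg S (phi t V W R)"
  unfolding phi_def using assms
  by (auto intro!: valued_in_subalg_INF valued_in_subalg_inf valued_in_subalg_conv
      valued_in_subalg_lres valued_in_subalg_rres valued_in_subalg_rcomp)

lemma finite_valued_in_subalg:
  assumes "finite (subalg_gen S)"
  shows "finite {R :: 'x::finite \<Rightarrow> 'y::finite \<Rightarrow> 'l::complete_residuated_lattice. valued_in_subalg S R}"
proof -
  have finite_funs: "finite {f :: 'c::finite \<Rightarrow> 'd. \<forall>x. f x \<in> B}" if "finite B" for B :: "'d set"
    using finite_set_of_finite_funs[of "UNIV :: 'c set" B] that by simp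
  have "{R :: 'x \<Rightarrow> 'y \<Rightarrow> 'l. valued_in_subalg S R}
      = {R. \<forall>x. R x \<in> {g. \<forall>y. g y \<in> subalg_gen S}}"
    unfolding valued_in_subalg_def by simp
  then show ?thesis using finite_funs[OF finite_funs[OF assms]] by simp
qed

lemma finite_range_descent_phi:
  fixes V :: "'i::finite \<Rightarrow> 'a::finite \<Rightarrow> 'a \<Rightarrow> 'l::complete_residuated_lattice"
    and W :: "'i \<Rightarrow> 'b::finite \<Rightarrow> 'b \<Rightarrow> 'l"
    and Z :: "'a \<Rightarrow> 'b \<Rightarrow> 'l"
  assumes "finite (subalg_gen S)" and "valued_in_subalg S Z"
    and "\<And>i. valued_in_subalg S (V i)" and "\<And>i. valued_in_subalg S (W i)"
  shows "finite (range (descent (phi t V W) Z))"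
proof -
  have "valued_in_subalg S (descent (phi t V W) Z n)" for n
  proof (induction n)
    case 0
    from assms(2) show ?case by simp
  next
    case (Suc n)
    then show ?case
      unfolding descent_Suc by (intro valued_in_subalg_inf valued_in_subalg_phi assms)
  qed
  then have "range (descent (phi t V W) Z) \<subseteq> {R. valued_in_subalg S R}" by auto
  then show ?thesis using finite_valued_in_subalg[OF assms(1)] by (rule finite_subset)
qed

lemma greatest_WL_descent_stable:
  assumes "descent (phi t V W) Z p = descent (phi t V W) Z (Suc p)"
  shows "greatest_WL t V W Z (descent (phi t V W) Z p)"
  unfolding greatest_WL_def is_WL_iff_post_fixpoint
  using descent_stable_imp_post_fixpoint[OF assms] post_fixpoint_le_descent[OF mono_phi]
  by blast

lemma Rseq_eq_descent: "Rseq t V W Z k = descent (phi t V W) Z (k - 1)"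
  by (simp add: Rseq_def descent_def)

theorem theorem5p3:
  fixes V :: "'i::finite \<Rightarrow> 'a::finite \<Rightarrow> 'a \<Rightarrow> 'l::complete_residuated_lattice"
    and W :: "'i \<Rightarrow> 'b::finite \<Rightarrow> 'b \<Rightarrow> 'l"
    and Z :: "'a \<Rightarrow> 'b \<Rightarrow> 'l"
    and t :: nat
  assumes "t \<in> {1..6}"
    and "finite (subalg_gen (range (case_prod Z) \<union> (\<Union>i. range (case_prod (V i)) \<union> range (case_prod (W i)))))"
  shows "(\<forall>k\<ge>1. Rseq t V W Z (k + 1) \<le> Rseq t V W Z k)
       \<and> finite {Rseq t V W Z k | k. k \<ge> 1}
       \<and> (\<exists>k\<ge>1. Rseq t V W Z k = Rseq t V W Z (k + 1)
              \<and> (\<forall>j. 1 \<le> j \<and> j < k \<longrightarrow> Rseq t V W Z j \<noteq> Rseq t V W Z (j + 1))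
              \<and> greatest_WL t V W Z (Rseq t V W Z k))"
proof -
  let ?S = "range (case_prod Z) \<union> (\<Union>i. range (case_prod (V i)) \<union> range (case_prod (W i)))"
  let ?r = "descent (phi t V W) Z"
  have "valued_in_subalg ?S Z" "valued_in_subalg ?S (V i)" "valued_in_subalg ?S (W i)" for i
    by (rule valued_in_subalg_base, blast)+
  with assms(2) have finite_range: "finite (range ?r)"
    by (intro finite_range_descent_phi)
  then have "\<exists>p. ?r p = ?r (Suc p)"
    by (rule antimono_finite_range_imp_stable[OF antimono_descent])
  then obtain p where stable: "?r p = ?r (Suc p)" and first: "\<forall>q<p. ?r q \<noteq> ?r (Suc q)"
    unfolding exists_least_iff[of "\<lambda>p. ?r p = ?r (Suc p)"] by blast
  have "greatest_WL t V W Z (Rseq t V W Z (p + 1))"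
    using greatest_WL_descent_stable[OF stable] by (simp add: Rseq_eq_descent)
  moreover have "Rseq t V W Z (p + 1) = Rseq t V W Z (p + 1 + 1)"
    using stable by (simp add: Rseq_eq_descent del: descent_Suc)
  moreover have "\<forall>j. 1 \<le> j \<and> j < p + 1 \<longrightarrow> Rseq t V W Z j \<noteq> Rseq t V W Z (j + 1)"
  proof (intro allI impI)
    fix j assume "1 \<le> j \<and> j < p + 1"
    then obtain q where "j = Suc q" and "q < p" by (cases j) auto
    with first show "Rseq t V W Z j \<noteq> Rseq t V W Z (j + 1)"
      by (simp add: Rseq_eq_descent del: descent_Suc)
  qed
  moreover have "\<forall>k\<ge>1. Rseq t V W Z (k + 1) \<le> Rseq t V W Z k"
    by (auto simp: Rseq_eq_descent intro: antimonoD[OF antimono_descent])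
  moreover have "finite {Rseq t V W Z k | k. k \<ge> 1}"
    by (rule finite_subset[OF _ finite_range]) (auto simp: Rseq_eq_descent)
  ultimately show ?thesis
    by (intro conjI exI[of _ "p + 1"]) simp_all
qed

end
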